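(* Let $z_0\in\mathbb{C}$ and let $g(z),h(z)$ be functions analytic in a neighbourhood of $z_0$ with $g'(z_0)\neq 0$ and $h(z_0)\neq 0$. Let $f(z)=g(z)+h(z)(z-z_0)^{3/2}$ near $z_0$, and put $u_0=g(z_0)$. Then the relation $u=f(z)$ can be locally inverted near $(z_0,u_0)$: there exist functions $G(u),H(u)$ analytic in a neighbourhood of $u_0$ such that the inverse is given by $$z=G(u)+H(u)(u-u_0)^{3/2},$$ and these satisfy $G(u_0)=z_0$, $G'(u_0)=1/g'(z_0)$ and $H(u_0)=-h(z_0)/g'(z_0)^{5/2}$ (in particular $H(u_0)\neq 0$).
   Context: Here $(z-z_0)^{3/2}$ and $(u-u_0)^{3/2}$ denote a fixed branch of the power function in a slit neighbourhood of $z_0$, respectively $u_0$. A function of the form $g(z)+h(z)(z-z_0)^{3/2}$ with $g,h$ analytic at $z_0$ and $h(z_0)\ne 0$ is said to have a $3/2$-singularity at $z_0$. *)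

theory Defs
  imports "HOL-Analysis.Analysis"
begin

definition slit_disc :: "complex \<Rightarrow> real \<Rightarrow> complex \<Rightarrow> complex set" where
  "slit_disc c r d = ball c r - {c + complex_of_real t * d | t. 0 \<le> t}"

definition pow32_branch :: "(complex \<Rightarrow> complex) \<Rightarrow> complex \<Rightarrow> real \<Rightarrow> complex \<Rightarrow> bool" where
  "pow32_branch p c r d \<longleftrightarrow> d \<noteq> 0 \<and> p holomorphic_on slit_disc c r d \<and>
     (\<forall>z\<in>slit_disc c r d. (p z)^2 = (z - c)^3)"

end

theory Submission
  imports Defs "HOL-Complex_Analysis.Complex_Analysis"
begin

text \<open>Substituting \<open>z = z0 + s^2\<close>, the relation \<open>u = f z\<close> becomes \<open>u - u0 = s^2 \<phi>(s)\<close>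
  with \<open>\<phi>\<close> holomorphic and \<open>\<phi>(0) = g'(z0) \<noteq> 0\<close>. With a holomorphic square root \<open>\<psi>\<close> of \<open>\<phi>\<close>,
  \<open>t = s \<psi>(s)\<close> is a local coordinate, so \<open>s = t \<tau>(t)\<close> where \<open>u - u0 = t^2\<close>.
  Splitting \<open>\<tau>(t)^2\<close> into even and odd parts gives \<open>z - z0 = t^2 A(t^2) + t^3 B(t^2)\<close>,
  i.e. \<open>z = G(u) + H(u) (u - u0)^(3/2)\<close>, and \<open>\<tau>(0) = 1/c\<close>, \<open>\<tau>'(0) = -h(z0)/(2 c^4)\<close>
  with \<open>c^2 = g'(z0)\<close> yield the values at \<open>u0\<close>. It remains to match the branches: the
  given branch \<open>p\<close> is \<open>s^3\<close> on a half plane of \<open>s\<close>, and on sectors avoiding the slit of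
  \<open>u\<close> a suitable root \<open>t\<close> of \<open>u - u0\<close> makes \<open>s = t \<tau>(t)\<close> land in that half plane.\<close>

lemma holomorphic_factor_at:
  assumes "f holomorphic_on ball a r" "r > 0"
  obtains q where "q holomorphic_on ball a r" "\<And>z. f z = f a + (z - a) * q z" "q a = deriv f a"
proof
  let ?q = "\<lambda>z. if z = a then deriv f a else (f z - f a) / (z - a)"
  show "?q holomorphic_on ball a r"
    by (rule pole_lemma[OF assms(1)]) (simp add: assms(2))
  show "f z = f a + (z - a) * ?q z" for z
    by (cases "z = a") auto
qed simp

lemma holomorphic_on_compose_into:
  "g holomorphic_on T \<Longrightarrow> f holomorphic_on S \<Longrightarrow> (\<And>x. x \<in> S \<Longrightarrow> f x \<in> T) \<Longrightarrow>
    (\<lambda>x. g (f x)) holomorphic_on S"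
  using holomorphic_on_compose_gen[of f S g T] by (auto simp: o_def)

lemma norm_csqrt_less: "norm w < \<rho>^2 \<Longrightarrow> \<rho> > 0 \<Longrightarrow> norm (csqrt w) < \<rho>"
  by (metis norm_csqrt abs_of_pos real_sqrt_abs real_sqrt_less_iff)

lemma isCont_csqrt_0: "isCont csqrt 0"
proof -
  have "((\<lambda>w. sqrt (norm w)) \<longlongrightarrow> sqrt (norm (0::complex))) (at 0)"
    by (intro tendsto_intros) (simp add: tendsto_norm_zero_iff)
  then have "((\<lambda>w. norm (csqrt w)) \<longlongrightarrow> 0) (at 0)"
    by simp
  then show ?thesis
    unfolding isCont_def using tendsto_norm_zero_iff by fastforce
qed

lemma even_holomorphic_comp_csqrt:
  fixes E :: "complex \<Rightarrow> complex"
  assumes hol: "E holomorphic_on ball 0 \<rho>" and even: "\<And>t. E (-t) = E t" and "\<rho> > 0"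
  shows "(\<lambda>w. E (csqrt w)) holomorphic_on ball 0 (\<rho>^2)"
proof (rule no_isolated_singularity'[where K = "{0}"])
  let ?B = "ball (0::complex) (\<rho>^2)"
  have sqrt_in: "csqrt w \<in> ball 0 \<rho>" "\<i> * csqrt (-w) \<in> ball 0 \<rho>" if "w \<in> ?B" for w
    using that norm_csqrt_less[of w \<rho>] norm_csqrt_less[of "-w" \<rho>] \<open>\<rho> > 0\<close> by (auto simp: norm_mult)
  have "(\<lambda>w. E (csqrt w)) holomorphic_on ?B - \<real>\<^sub>\<le>\<^sub>0"
    by (rule holomorphic_on_compose_into[OF hol holomorphic_on_subset[OF holomorphic_on_csqrt]])
      (use sqrt_in in auto)
  moreover have "(\<lambda>w. E (csqrt w)) holomorphic_on ?B - \<real>\<^sub>\<ge>\<^sub>0"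
  proof (rule holomorphic_transform)
    show "(\<lambda>w. E (\<i> * csqrt (-w))) holomorphic_on ?B - \<real>\<^sub>\<ge>\<^sub>0"
      by (rule holomorphic_on_compose_into[OF hol])
        (use sqrt_in in \<open>auto simp: complex_nonpos_Reals_iff complex_nonneg_Reals_iff intro!: holomorphic_intros\<close>)
    show "E (\<i> * csqrt (-w)) = E (csqrt w)" for w
    proof -
      have "(\<i> * csqrt (-w))^2 = (csqrt w)^2"
        by (simp add: power_mult_distrib)
      then show ?thesis
        using even by (metis power2_eq_iff)
    qed
  qed
  moreover have "?B - {0} = (?B - \<real>\<^sub>\<le>\<^sub>0) \<union> (?B - \<real>\<^sub>\<ge>\<^sub>0)"
    by (auto simp: complex_nonpos_Reals_iff complex_nonneg_Reals_iff complex_eq_iff)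
  ultimately show "(\<lambda>w. E (csqrt w)) holomorphic_on ?B - {0}"
    by (metis holomorphic_on_Un open_Diff open_ball closed_nonpos_Reals_complex closed_nonneg_Reals_complex)
  have "isCont E 0"
    using hol \<open>\<rho> > 0\<close> by (metis centre_in_ball continuous_on_interior holomorphic_on_imp_continuous_on interior_ball)
  then have "isCont (\<lambda>w. E (csqrt w)) 0"
    using isCont_o2[OF isCont_csqrt_0, of E] by simp
  then show "((\<lambda>w. E (csqrt w)) \<longlongrightarrow> E (csqrt z)) (at z within ?B)" if "z \<in> {0}" for z
    using that by (auto simp: isCont_def intro: tendsto_mono[OF at_le[OF subset_UNIV]])
qed auto

lemma csqrt_square_cases: "csqrt (t^2) = t \<or> csqrt (t^2) = -t"
  by (metis power2_csqrt power2_eq_iff)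

lemma odd_holomorphic_factor:
  fixes f :: "complex \<Rightarrow> complex"
  assumes "f holomorphic_on ball 0 \<rho>" "\<rho> > 0" and odd: "\<And>t. f (-t) = - f t"
  obtains q where "q holomorphic_on ball 0 \<rho>" "\<And>t. f t = t * q t" "\<And>t. q (-t) = q t"
    "q 0 = deriv f 0"
proof -
  obtain q where q: "q holomorphic_on ball 0 \<rho>" "\<And>t. f t = f 0 + (t - 0) * q t" "q 0 = deriv f 0"
    using holomorphic_factor_at[OF assms(1,2)] by blast
  have "f 0 = 0"
    using odd[of 0] by simp
  then have factor: "f t = t * q t" for t
    using q(2)[of t] by simp
  have even: "q (-t) = q t" for t
  proof (cases "t = 0")
    case False
    then show ?thesis
      using odd[of t] factor[of t] factor[of "-t"] by simp
  qed simp
  show ?thesis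
    by (rule that[OF q(1) factor even q(3)])
qed

lemma holomorphic_even_odd_decomposition:
  assumes hol: "T holomorphic_on ball 0 \<rho>" and "\<rho> > 0"
  obtains A B where "A holomorphic_on ball 0 (\<rho>^2)" "B holomorphic_on ball 0 (\<rho>^2)"
    "\<And>t. t \<in> ball 0 \<rho> \<Longrightarrow> T t = A (t^2) + t * B (t^2)" "A 0 = T 0" "B 0 = deriv T 0"
proof -
  have hol_neg: "(\<lambda>t. T (-t)) holomorphic_on ball 0 \<rho>"
    by (rule holomorphic_on_compose_into[OF hol]) (auto intro: holomorphic_intros)
  define Te where "Te t = (T t + T (-t)) / 2" for t
  define To where "To t = (T t - T (-t)) / 2" for t
  have "To holomorphic_on ball 0 \<rho>"
    unfolding To_def by (intro holomorphic_intros hol hol_neg) simp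
  moreover have "To (-t) = - To t" for t
    by (simp add: To_def field_simps)
  ultimately obtain R where R: "R holomorphic_on ball 0 \<rho>" "\<And>t. To t = t * R t"
      "\<And>t. R (-t) = R t" "R 0 = deriv To 0"
    using odd_holomorphic_factor \<open>\<rho> > 0\<close> by blast
  have Te_even: "Te (-t) = Te t" for t
    by (simp add: Te_def add.commute)
  have sq: "E (csqrt (t^2)) = E t" if "\<And>t. E (-t) = E t" for E :: "complex \<Rightarrow> complex" and t
    using csqrt_square_cases[of t] that by auto
  show ?thesis
  proof
    show "(\<lambda>w. Te (csqrt w)) holomorphic_on ball 0 (\<rho>^2)"
      by (rule even_holomorphic_comp_csqrt[where E = Te, OF _ Te_even \<open>\<rho> > 0\<close>])
        (unfold Te_def, intro holomorphic_intros hol hol_neg, simp)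
    show "(\<lambda>w. R (csqrt w)) holomorphic_on ball 0 (\<rho>^2)"
      by (rule even_holomorphic_comp_csqrt[OF R(1,3) \<open>\<rho> > 0\<close>])
    have "T t = Te t + To t" for t
      by (simp add: Te_def To_def field_simps)
    then show "T t = Te (csqrt (t^2)) + t * R (csqrt (t^2))" for t
      using sq[of Te, OF Te_even] sq[of R, OF R(3)] R(2) by metis
    show "Te (csqrt 0) = T 0"
      by (simp add: Te_def)
    have "(T has_field_derivative deriv T 0) (at 0)"
      using holomorphic_derivI[OF hol open_ball] \<open>\<rho> > 0\<close> by simp
    then have "(To has_field_derivative (deriv T 0 - deriv T 0 * -1) / 2) (at 0)"
      unfolding To_def by (auto intro!: derivative_eq_intros DERIV_chain2[where g = uminus])
    then show "R (csqrt 0) = deriv T 0"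
      using R(4) by (simp add: DERIV_imp_deriv)
  qed
qed

lemma holomorphic_local_sqrt:
  assumes hol: "\<phi> holomorphic_on ball a R" and "R > 0" "\<phi> a = c^2" "c \<noteq> 0"
  obtains r \<psi> where "0 < r" "r \<le> R" "\<psi> holomorphic_on ball a r" "\<And>s. \<psi> s ^ 2 = \<phi> s"
    "\<psi> a = c" "(\<psi> has_field_derivative deriv \<phi> a / (2 * c)) (at a)"
proof -
  let ?U = "ball a R \<inter> (\<lambda>s. \<phi> s / c^2) -` (- \<real>\<^sub>\<le>\<^sub>0)"
  have "open ?U"
    using hol by (intro continuous_open_preimage continuous_intros holomorphic_on_imp_continuous_on)
      (use \<open>c \<noteq> 0\<close> in \<open>auto simp: closed_nonpos_Reals_complex open_Compl\<close>)
  moreover have "a \<in> ?U"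
    using assms by simp
  ultimately obtain r where r: "r > 0" "ball a r \<subseteq> ?U"
    by (meson openE)
  define \<psi> where "\<psi> s = c * csqrt (\<phi> s / c^2)" for s
  show ?thesis
  proof
    show "min r R > 0" "min r R \<le> R"
      using r \<open>R > 0\<close> by auto
    show "\<psi> holomorphic_on ball a (min r R)"
      unfolding \<psi>_def using r by (intro holomorphic_intros holomorphic_on_subset[OF hol]) auto
    show "\<psi> s ^ 2 = \<phi> s" for s
      using \<open>c \<noteq> 0\<close> by (simp add: \<psi>_def power_mult_distrib)
    show "\<psi> a = c"
      using assms by (simp add: \<psi>_def)
    have "(\<phi> has_field_derivative deriv \<phi> a) (at a)"
      using holomorphic_derivI[OF hol open_ball] \<open>R > 0\<close> by simp
    then show "(\<psi> has_field_derivative deriv \<phi> a / (2 * c)) (at a)"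
      unfolding \<psi>_def using assms
      by (auto intro!: derivative_eq_intros simp: field_simps eval_nat_numeral)
  qed
qed

lemma holomorphic_local_inverse:
  assumes hol: "f holomorphic_on S" and "open S" "a \<in> S" "deriv f a \<noteq> 0"
  obtains \<rho> g where "\<rho> > 0" "g holomorphic_on ball (f a) \<rho>"
    "\<And>w. w \<in> ball (f a) \<rho> \<Longrightarrow> g w \<in> S \<and> f (g w) = w"
    "g (f a) = a" "deriv g (f a) = 1 / deriv f a"
proof -
  obtain r where r: "r > 0" "ball a r \<subseteq> S" "inj_on f (ball a r)"
    using has_complex_derivative_locally_injective assms by metis
  have hol_r: "f holomorphic_on ball a r"
    using holomorphic_on_subset[OF hol r(2)] .
  obtain g where g: "g holomorphic_on f ` ball a r"
      "\<And>z. z \<in> ball a r \<Longrightarrow> deriv f z * deriv g (f z) = 1"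
      "\<And>z. z \<in> ball a r \<Longrightarrow> g (f z) = z"
    using holomorphic_has_inverse[OF hol_r open_ball r(3)] by metis
  have "open (f ` ball a r)" "f a \<in> f ` ball a r"
    using open_mapping_thm3[OF hol_r open_ball r(3)] r(1) by auto
  then obtain \<rho> where \<rho>: "\<rho> > 0" "ball (f a) \<rho> \<subseteq> f ` ball a r"
    by (meson openE)
  show ?thesis
  proof
    show "g holomorphic_on ball (f a) \<rho>"
      using holomorphic_on_subset[OF g(1) \<rho>(2)] .
    show "g w \<in> S \<and> f (g w) = w" if "w \<in> ball (f a) \<rho>" for w
      using that \<rho>(2) r(2) g(3) by fastforce
    show "g (f a) = a" "deriv g (f a) = 1 / deriv f a"
      using g(2,3)[of a] r(1) \<open>deriv f a \<noteq> 0\<close> by (auto simp: field_simps)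
  qed (rule \<rho>(1))
qed

lemma deriv_of_product_identity:
  assumes "\<tau> holomorphic_on ball 0 \<rho>" "\<rho> > 0" "(\<psi> has_field_derivative \<psi>') (at 0)"
    and "\<And>t. t \<in> ball 0 \<rho> \<Longrightarrow> \<tau> t * \<psi> (t * \<tau> t) = 1"
  shows "deriv \<tau> 0 * \<psi> 0 + \<psi>' * \<tau> 0 ^ 2 = 0"
proof -
  have d\<tau>: "(\<tau> has_field_derivative deriv \<tau> 0) (at 0)"
    using holomorphic_derivI[OF assms(1) open_ball] assms(2) by simp
  have d_mult: "((\<lambda>t. t * \<tau> t) has_field_derivative 1 * \<tau> 0 + deriv \<tau> 0 * 0) (at 0)"
    by (intro DERIV_mult DERIV_ident d\<tau>)
  have d\<psi>: "(\<psi> has_field_derivative \<psi>') (at (0 * \<tau> 0))"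
    using assms(3) by simp
  have "((\<lambda>t. \<tau> t * \<psi> (t * \<tau> t)) has_field_derivative
      deriv \<tau> 0 * \<psi> (0 * \<tau> 0) + \<psi>' * (1 * \<tau> 0 + deriv \<tau> 0 * 0) * \<tau> 0) (at 0)"
    by (rule DERIV_mult[OF d\<tau> DERIV_chain2[OF d\<psi> d_mult]])
  moreover have "((\<lambda>t. \<tau> t * \<psi> (t * \<tau> t)) has_field_derivative 0) (at 0)"
    by (rule has_field_derivative_transform_within_open[of "\<lambda>_. 1" _ _ "ball 0 \<rho>"])
      (use assms(2,4) in auto)
  ultimately have "deriv \<tau> 0 * \<psi> (0 * \<tau> 0) + \<psi>' * (1 * \<tau> 0 + deriv \<tau> 0 * 0) * \<tau> 0 = 0"
    by (rule DERIV_unique)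
  then show ?thesis
    by (simp add: power2_eq_square mult.assoc)
qed

lemma invert_square_times_holomorphic:
  assumes hol: "\<phi> holomorphic_on ball 0 R" and "R > 0" "\<phi> 0 = c^2" "c \<noteq> 0"
  obtains \<rho> \<tau> where "\<rho> > 0" "\<tau> holomorphic_on ball 0 \<rho>" "\<tau> 0 = 1 / c"
    "deriv \<tau> 0 = - deriv \<phi> 0 / (2 * c^4)"
    "\<And>t. t \<in> ball 0 \<rho> \<Longrightarrow> t * \<tau> t \<in> ball 0 R \<and> (t * \<tau> t)^2 * \<phi> (t * \<tau> t) = t^2"
proof -
  obtain r \<psi> where \<psi>: "0 < r" "r \<le> R" "\<psi> holomorphic_on ball 0 r" "\<And>s. \<psi> s ^ 2 = \<phi> s"
      "\<psi> 0 = c" "(\<psi> has_field_derivative deriv \<phi> 0 / (2 * c)) (at 0)"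
    using holomorphic_local_sqrt[OF hol] assms by metis
  define \<Theta> where "\<Theta> s = s * \<psi> s" for s
  have "(\<Theta> has_field_derivative 1 * \<psi> 0 + deriv \<phi> 0 / (2 * c) * 0) (at 0)"
    unfolding \<Theta>_def by (intro DERIV_mult DERIV_ident \<psi>(6))
  then have "deriv \<Theta> 0 = c"
    using \<psi>(5) by (simp add: DERIV_imp_deriv)
  moreover have "\<Theta> holomorphic_on ball 0 r" "\<Theta> 0 = 0"
    unfolding \<Theta>_def by (auto intro: holomorphic_intros \<psi>(3))
  ultimately obtain \<rho> \<sigma> where \<sigma>: "\<rho> > 0" "\<sigma> holomorphic_on ball 0 \<rho>"
      "\<And>t. t \<in> ball 0 \<rho> \<Longrightarrow> \<sigma> t \<in> ball 0 r \<and> \<Theta> (\<sigma> t) = t" "\<sigma> 0 = 0" "deriv \<sigma> 0 = 1 / c"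
    using holomorphic_local_inverse[of \<Theta> "ball 0 r" 0] \<psi>(1) \<open>c \<noteq> 0\<close> by (metis centre_in_ball open_ball)
  obtain \<tau> where \<tau>: "\<tau> holomorphic_on ball 0 \<rho>" "\<And>t. \<sigma> t = \<sigma> 0 + (t - 0) * \<tau> t" "\<tau> 0 = 1 / c"
    using holomorphic_factor_at[OF \<sigma>(2,1)] \<sigma>(5) by metis
  have \<sigma>\<tau>: "\<sigma> t = t * \<tau> t" for t
    using \<tau>(2)[of t] \<sigma>(4) by simp
  have inverse: "\<tau> t * \<psi> (t * \<tau> t) = 1" if "t \<in> ball 0 \<rho>" for t
  proof (cases "t = 0")
    case False
    then show ?thesis
      using \<sigma>(3)[OF that] by (simp add: \<Theta>_def \<sigma>\<tau>)
  qed (use \<tau>(3) \<psi>(5) \<open>c \<noteq> 0\<close> in simp)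
  have "deriv \<tau> 0 * \<psi> 0 + deriv \<phi> 0 / (2 * c) * \<tau> 0 ^ 2 = 0"
    using deriv_of_product_identity[OF \<tau>(1) \<sigma>(1) \<psi>(6) inverse] .
  then have "deriv \<tau> 0 = - deriv \<phi> 0 / (2 * c^4)"
    using \<tau>(3) \<psi>(5) \<open>c \<noteq> 0\<close> by (simp add: field_simps eval_nat_numeral add_eq_0_iff)
  moreover have "t * \<tau> t \<in> ball 0 R \<and> (t * \<tau> t)^2 * \<phi> (t * \<tau> t) = t^2" if "t \<in> ball 0 \<rho>" for t
  proof
    show "t * \<tau> t \<in> ball 0 R"
      using \<sigma>(3)[OF that] \<psi>(2) by (auto simp: \<sigma>\<tau>)
    have "(t * \<tau> t)^2 * \<phi> (t * \<tau> t) = t^2 * (\<tau> t * \<psi> (t * \<tau> t))^2"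
      by (simp add: \<psi>(4)[symmetric] power_mult_distrib)
    then show "(t * \<tau> t)^2 * \<phi> (t * \<tau> t) = t^2"
      using inverse[OF that] by simp
  qed
  ultimately show ?thesis
    using that \<sigma>(1) \<tau>(1,3) by blast
qed

lemma norm_less_sqrt_iff: "norm x < sqrt r \<longleftrightarrow> norm x ^ 2 < r"
  using real_sqrt_less_iff[of "norm x ^ 2" r] by simp

lemma square_substitution:
  fixes g h :: "complex \<Rightarrow> complex"
  assumes "r > 0" and hg: "g holomorphic_on ball z0 r" and hh: "h holomorphic_on ball z0 r"
  obtains \<phi> where "\<phi> holomorphic_on ball 0 (sqrt r)" "\<phi> 0 = deriv g z0" "deriv \<phi> 0 = h z0"
    "\<And>s. g (z0 + s^2) + h (z0 + s^2) * s^3 = g z0 + s^2 * \<phi> s"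
proof -
  obtain \<gamma> where \<gamma>: "\<gamma> holomorphic_on ball z0 r" "\<And>z. g z = g z0 + (z - z0) * \<gamma> z"
      "\<gamma> z0 = deriv g z0"
    using holomorphic_factor_at[OF hg \<open>r > 0\<close>] by blast
  define \<phi> where "\<phi> s = \<gamma> (z0 + s^2) + h (z0 + s^2) * s" for s
  show ?thesis
  proof
    show "\<phi> holomorphic_on ball 0 (sqrt r)"
      unfolding \<phi>_def
      by (intro holomorphic_intros holomorphic_on_compose_into[OF \<gamma>(1)]
          holomorphic_on_compose_into[OF hh]) (auto simp: dist_norm norm_power norm_less_sqrt_iff)
    show "\<phi> 0 = deriv g z0"
      using \<gamma>(3) by (simp add: \<phi>_def)
    have d\<gamma>: "(\<gamma> has_field_derivative deriv \<gamma> z0) (at (z0 + 0^2))"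
      and dh: "(h has_field_derivative deriv h z0) (at (z0 + 0^2))"
      using holomorphic_derivI[OF \<gamma>(1)] holomorphic_derivI[OF hh] \<open>r > 0\<close> by auto
    have dsq: "((\<lambda>s. z0 + s^2) has_field_derivative 0) (at 0)"
      by (auto intro!: derivative_eq_intros)
    have "(\<phi> has_field_derivative deriv \<gamma> z0 * 0 + (deriv h z0 * 0 * 0 + 1 * h (z0 + 0^2))) (at 0)"
      unfolding \<phi>_def
      by (intro DERIV_add DERIV_mult DERIV_ident DERIV_chain2[OF d\<gamma> dsq] DERIV_chain2[OF dh dsq])
    then show "deriv \<phi> 0 = h z0"
      by (simp add: DERIV_imp_deriv)
    show "g (z0 + s^2) + h (z0 + s^2) * s^3 = g z0 + s^2 * \<phi> s" for s
      using \<gamma>(2)[of "z0 + s^2"] by (simp add: \<phi>_def algebra_simps eval_nat_numeral)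
  qed
qed

lemma quadratic_normal_form:
  fixes g h :: "complex \<Rightarrow> complex"
  assumes "r > 0" "g holomorphic_on ball z0 r" "h holomorphic_on ball z0 r"
    and "c^2 = deriv g z0" "c \<noteq> 0"
  obtains \<rho> \<tau> where "\<rho> > 0" "\<tau> holomorphic_on ball 0 \<rho>" "\<tau> 0 = 1 / c"
    "deriv \<tau> 0 = - h z0 / (2 * c^4)"
    "\<And>t. t \<in> ball 0 \<rho> \<Longrightarrow> norm (t * \<tau> t)^2 < r \<and>
       g (z0 + (t * \<tau> t)^2) + h (z0 + (t * \<tau> t)^2) * (t * \<tau> t)^3 = g z0 + t^2"
proof -
  obtain \<phi> where \<phi>: "\<phi> holomorphic_on ball 0 (sqrt r)" "\<phi> 0 = c^2" "deriv \<phi> 0 = h z0"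
      "\<And>s. g (z0 + s^2) + h (z0 + s^2) * s^3 = g z0 + s^2 * \<phi> s"
    using square_substitution[OF assms(1-3)] assms(4) by metis
  obtain \<rho> \<tau> where \<tau>: "\<rho> > 0" "\<tau> holomorphic_on ball 0 \<rho>" "\<tau> 0 = 1 / c"
      "deriv \<tau> 0 = - h z0 / (2 * c^4)"
      "\<And>t. t \<in> ball 0 \<rho> \<Longrightarrow> t * \<tau> t \<in> ball 0 (sqrt r) \<and> (t * \<tau> t)^2 * \<phi> (t * \<tau> t) = t^2"
    using invert_square_times_holomorphic[OF \<phi>(1) _ \<phi>(2) \<open>c \<noteq> 0\<close>] \<open>r > 0\<close> \<phi>(3) by auto
  show ?thesis
  proof (rule that[OF \<tau>(1-4)])
    show "norm (t * \<tau> t)^2 < r \<and>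
        g (z0 + (t * \<tau> t)^2) + h (z0 + (t * \<tau> t)^2) * (t * \<tau> t)^3 = g z0 + t^2"
      if "t \<in> ball 0 \<rho>" for t
      using \<tau>(5)[OF that] \<phi>(4)[of "t * \<tau> t"] by (simp add: norm_less_sqrt_iff mult.commute)
  qed
qed

lemma three_halves_expansion:
  assumes hol: "\<tau> holomorphic_on ball 0 \<rho>" and "\<rho> > 0"
  obtains G H where "G holomorphic_on ball u0 (\<rho>^2)" "H holomorphic_on ball u0 (\<rho>^2)"
    "\<And>t. t \<in> ball 0 \<rho> \<Longrightarrow> G (u0 + t^2) + H (u0 + t^2) * t^3 = z0 + (t * \<tau> t)^2"
    "G u0 = z0" "deriv G u0 = \<tau> 0 ^ 2" "H u0 = 2 * \<tau> 0 * deriv \<tau> 0"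
proof -
  have "(\<lambda>t. \<tau> t ^ 2) holomorphic_on ball 0 \<rho>"
    by (intro holomorphic_intros hol)
  then obtain A B where AB: "A holomorphic_on ball 0 (\<rho>^2)" "B holomorphic_on ball 0 (\<rho>^2)"
      "\<And>t. t \<in> ball 0 \<rho> \<Longrightarrow> \<tau> t ^ 2 = A (t^2) + t * B (t^2)"
      "A 0 = \<tau> 0 ^ 2" "B 0 = deriv (\<lambda>t. \<tau> t ^ 2) 0"
    using holomorphic_even_odd_decomposition \<open>\<rho> > 0\<close> by blast
  have shift: "u - u0 \<in> ball 0 (\<rho>^2)" if "u \<in> ball u0 (\<rho>^2)" for u
    using that by (simp add: dist_norm norm_minus_commute)
  show ?thesis
  proof
    show "(\<lambda>u. z0 + (u - u0) * A (u - u0)) holomorphic_on ball u0 (\<rho>^2)"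
      "(\<lambda>u. B (u - u0)) holomorphic_on ball u0 (\<rho>^2)"
      using shift by (auto intro!: holomorphic_intros holomorphic_on_compose_into[OF AB(1)]
          holomorphic_on_compose_into[OF AB(2)])
    show "z0 + (u0 + t^2 - u0) * A (u0 + t^2 - u0) + B (u0 + t^2 - u0) * t^3 = z0 + (t * \<tau> t)^2"
      if "t \<in> ball 0 \<rho>" for t
      using AB(3)[OF that] by (simp add: power_mult_distrib algebra_simps eval_nat_numeral)
    have "(A has_field_derivative deriv A 0) (at (u0 - u0))"
      using holomorphic_derivI[OF AB(1) open_ball] \<open>\<rho> > 0\<close> by simp
    then have "((\<lambda>u. z0 + (u - u0) * A (u - u0)) has_field_derivative A 0) (at u0)"
      by (auto intro!: derivative_eq_intros DERIV_chain2[where f = A])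
    then show "deriv (\<lambda>u. z0 + (u - u0) * A (u - u0)) u0 = \<tau> 0 ^ 2"
      using AB(4) by (simp add: DERIV_imp_deriv)
    have "(\<tau> has_field_derivative deriv \<tau> 0) (at 0)"
      using holomorphic_derivI[OF hol open_ball] \<open>\<rho> > 0\<close> by simp
    then have "((\<lambda>t. \<tau> t ^ 2) has_field_derivative 2 * \<tau> 0 * deriv \<tau> 0) (at 0)"
      by (auto intro!: derivative_eq_intros)
    then show "B (u0 - u0) = 2 * \<tau> 0 * deriv \<tau> 0"
      using AB(5) by (simp add: DERIV_imp_deriv)
  qed simp
qed

lemma square_in_slit_disc_iff:
  assumes "\<beta>^2 = d" "\<beta> \<noteq> 0"
  shows "c + s^2 \<in> slit_disc c r d \<longleftrightarrow> norm s ^ 2 < r \<and> Im (s / \<beta>) \<noteq> 0"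
proof -
  have "(\<exists>t. 0 \<le> t \<and> s^2 = of_real t * d) \<longleftrightarrow> Im (s / \<beta>) = 0"
  proof
    assume "\<exists>t. 0 \<le> t \<and> s^2 = of_real t * d"
    then obtain t where "0 \<le> t" "(s / \<beta>)^2 = (of_real (sqrt t))^2"
      using assms by (auto simp: power_divide simp flip: of_real_power)
    then show "Im (s / \<beta>) = 0"
      by (metis Im_complex_of_real neg_equal_0_iff_equal power2_eq_iff uminus_complex.sel(2))
  next
    assume "Im (s / \<beta>) = 0"
    then have "s / \<beta> = of_real (Re (s / \<beta>))"
      by (simp add: complex_eq_iff)
    then have "s^2 = of_real (Re (s / \<beta>) ^ 2) * d"
      using assms by (metis nonzero_eq_divide_eq of_real_power power_mult_distrib)
    then show "\<exists>t. 0 \<le> t \<and> s^2 = of_real t * d"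
      by (metis zero_le_power2)
  qed
  then show ?thesis
    by (auto simp: slit_disc_def dist_norm norm_power)
qed

lemma convex_upper_half_plane_div: "convex {s. 0 < Im (s / \<beta>)}"
proof (rule convexI)
  fix x y :: complex and u v :: real
  assume "x \<in> {s. 0 < Im (s / \<beta>)}" "y \<in> {s. 0 < Im (s / \<beta>)}" "0 \<le> u" "0 \<le> v" "u + v = 1"
  then have "0 < u * Im (x / \<beta>) + v * Im (y / \<beta>)"
  proof (cases "u = 0")
    case True
    then show ?thesis using \<open>u + v = 1\<close> \<open>y \<in> _\<close> by simp
  next
    case False
    then show ?thesis using \<open>0 \<le> u\<close> \<open>0 \<le> v\<close> \<open>x \<in> _\<close> \<open>y \<in> _\<close>
      by (simp add: add_pos_nonneg)
  qed
  moreover have "Im (a *\<^sub>R z / \<beta>) = a * Im (z / \<beta>)" for a z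
    by (metis scaleR_complex.sel(2) scaleR_conv_of_real times_divide_eq_right)
  ultimately show "u *\<^sub>R x + v *\<^sub>R y \<in> {s. 0 < Im (s / \<beta>)}"
    by (simp add: add_divide_distrib)
qed

lemma connected_half_disc: "connected {s. norm s ^ 2 < r \<and> 0 < Im (s / \<beta>)}"
proof -
  have "{s. norm s ^ 2 < r \<and> 0 < Im (s / \<beta>)} = ball 0 (sqrt r) \<inter> {s. 0 < Im (s / \<beta>)}"
    by (rule set_eqI) (simp add: norm_less_sqrt_iff)
  then show ?thesis
    by (simp add: convex_connected convex_Int convex_upper_half_plane_div)
qed

lemma continuous_square_eq_one_constant:
  fixes F :: "'a::topological_space \<Rightarrow> 'b::real_normed_div_algebra"
  assumes "connected S" "continuous_on S F" "\<And>s. s \<in> S \<Longrightarrow> F s ^ 2 = 1"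
  shows "(\<forall>s\<in>S. F s = 1) \<or> (\<forall>s\<in>S. F s = -1)"
proof -
  have range: "F ` S \<subseteq> {1, -1}"
    using assms(3) by (auto simp: power2_eq_1_iff)
  then have "F constant_on S"
    by (intro continuous_finite_range_constant assms(1,2)) (auto intro: finite_subset)
  then obtain \<kappa> where \<kappa>: "\<And>s. s \<in> S \<Longrightarrow> F s = \<kappa>"
    by (auto simp: constant_on_def)
  show ?thesis
  proof (cases "S = {}")
    case False
    then obtain s0 where "s0 \<in> S"
      by blast
    then show ?thesis
      using \<kappa> range by auto
  qed simp
qed

lemma pow32_branch_sign_on_half_disc:
  assumes "pow32_branch p c r d" "\<beta>^2 = d" "\<beta> \<noteq> 0"
  defines "D \<equiv> {s. norm s ^ 2 < r \<and> 0 < Im (s / \<beta>)}"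
  shows "(\<forall>s\<in>D. p (c + s^2) = s^3) \<or> (\<forall>s\<in>D. p (c + s^2) = - (s^3))"
proof -
  have hol: "p holomorphic_on slit_disc c r d"
    and p_sq: "\<And>z. z \<in> slit_disc c r d \<Longrightarrow> (p z)^2 = (z - c)^3"
    using assms(1) by (auto simp: pow32_branch_def)
  have in_slit: "c + s^2 \<in> slit_disc c r d" and nonzero: "s \<noteq> 0" if "s \<in> D" for s
    using that square_in_slit_disc_iff[OF assms(2,3)] by (auto simp: D_def)
  define F where "F s = p (c + s^2) / s^3" for s
  have "continuous_on D F"
    unfolding F_def using in_slit nonzero
    by (intro continuous_intros continuous_on_compose2[OF holomorphic_on_imp_continuous_on[OF hol]])
      auto
  moreover have "F s ^ 2 = 1" if "s \<in> D" for s
  proof -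
    have "(F s)^2 = (s^2)^3 / (s^3)^2"
      using p_sq[OF in_slit[OF that]] by (simp add: F_def power_divide)
    also have "\<dots> = 1"
      using nonzero[OF that] by (simp flip: power_mult)
    finally show ?thesis .
  qed
  ultimately have "(\<forall>s\<in>D. F s = 1) \<or> (\<forall>s\<in>D. F s = -1)"
    using continuous_square_eq_one_constant connected_half_disc unfolding D_def by blast
  then show ?thesis
    using nonzero by (auto simp: F_def divide_eq_eq)
qed

lemma pow32_branch_upper_half_plane:
  assumes "pow32_branch p c r d"
  obtains \<beta> where "\<beta>^2 = d" "\<beta> \<noteq> 0"
    "\<And>s. norm s ^ 2 < r \<Longrightarrow> 0 < Im (s / \<beta>) \<Longrightarrow> c + s^2 \<in> slit_disc c r d \<and> p (c + s^2) = s^3"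
proof -
  define \<beta> where "\<beta> = csqrt d"
  have \<beta>: "\<beta>^2 = d" "\<beta> \<noteq> 0" and neg\<beta>: "(- \<beta>)^2 = d" "- \<beta> \<noteq> 0"
    using assms by (auto simp: \<beta>_def pow32_branch_def)
  have in_slit: "c + s^2 \<in> slit_disc c r d" if "norm s ^ 2 < r" "0 < Im (s / b)" "b^2 = d" "b \<noteq> 0"
    for s b
    using that square_in_slit_disc_iff[OF that(3,4)] by simp
  consider "\<And>s. norm s ^ 2 < r \<Longrightarrow> 0 < Im (s / \<beta>) \<Longrightarrow> p (c + s^2) = s^3"
    | "\<And>s. norm s ^ 2 < r \<Longrightarrow> 0 < Im (s / \<beta>) \<Longrightarrow> p (c + s^2) = - (s^3)"
    using pow32_branch_sign_on_half_disc[OF assms \<beta>] by blast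
  then show ?thesis
  proof cases
    case 1
    then show ?thesis
      using that[OF \<beta>] in_slit[OF _ _ \<beta>] by blast
  next
    case 2
    have "p (c + s^2) = s^3" if "norm s ^ 2 < r" "0 < Im (s / - \<beta>)" for s
      using 2[of "- s"] that by simp
    then show ?thesis
      using that[OF neg\<beta>] in_slit[OF _ _ neg\<beta>] by blast
  qed
qed

lemma Re_mult_pos_near_one:
  fixes m a :: complex
  assumes "norm (a - 1) * norm m < Re m"
  shows "0 < Re (m * a)"
proof -
  have "Re (m * a) = Re m + Re (m * (a - 1))"
    by (simp add: algebra_simps)
  moreover have "- Re (m * (a - 1)) \<le> norm (a - 1) * norm m"
    using abs_Re_le_cmod[of "m * (a - 1)"] by (simp add: norm_mult mult.commute)
  ultimately show ?thesis
    using assms by linarith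
qed

lemma norm_sgn_neg_square_diff:
  fixes k m :: complex
  assumes "k \<noteq> 0" "m \<noteq> 0" "0 \<le> Re m"
  shows "norm (sgn (- (k^2 * m^2)) - sgn (k^2)) = 2 * Re m / norm m"
proof -
  have "m^2 + of_real (norm m ^ 2) = m * (m + cnj m)"
    by (simp only: complex_norm_square distrib_left flip: power2_eq_square)
  also have "\<dots> = m * of_real (2 * Re m)"
    by (simp add: complex_add_cnj)
  finally have "norm (m^2 + of_real (norm m ^ 2)) = 2 * Re m * norm m"
    using assms(3) by (simp add: norm_mult)
  moreover have "sgn (- (k^2 * m^2)) - sgn (k^2) = - sgn (k^2) * (m^2 + of_real (norm m ^ 2)) / of_real (norm m ^ 2)"
    using assms by (simp add: sgn_mult sgn_div_norm norm_mult norm_power scaleR_conv_of_real field_simps)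
  ultimately show ?thesis
    using assms by (simp add: norm_mult norm_divide norm_sgn power2_eq_square)
qed

text \<open>A square root of \<open>w\<close> cut along the ray through \<open>k^2\<close>; off the cut, \<open>slit_sqrt k w / k\<close>
  lies in the upper half plane.\<close>
definition slit_sqrt :: "complex \<Rightarrow> complex \<Rightarrow> complex" where
  "slit_sqrt k w = k * (\<i> * csqrt (- w / k^2))"

lemma slit_sqrt_squared: "k \<noteq> 0 \<Longrightarrow> (slit_sqrt k w)^2 = w"
  by (simp add: slit_sqrt_def power_mult_distrib)

lemma slit_disc_sgn_square_notin_nonpos_Reals:
  assumes "k \<noteq> 0" "u \<in> slit_disc u0 \<rho> (sgn (k^2))"
  shows "- (u - u0) / k^2 \<notin> \<real>\<^sub>\<le>\<^sub>0"
proof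
  assume "- (u - u0) / k^2 \<in> \<real>\<^sub>\<le>\<^sub>0"
  then obtain x where "x \<le> 0" "- (u - u0) / k^2 = of_real x"
    by (auto elim!: nonpos_Reals_cases)
  then have "u = u0 + of_real (- x * norm (k^2)) * sgn (k^2)" "0 \<le> - x * norm (k^2)"
    using assms(1) by (simp_all add: sgn_div_norm scaleR_conv_of_real field_simps mult_nonpos_nonneg)
  then show False
    using assms(2) unfolding slit_disc_def by blast
qed

lemma pow32_branch_slit_sqrt:
  assumes "k \<noteq> 0"
  shows "pow32_branch (\<lambda>u. slit_sqrt k (u - u0) ^ 3) u0 \<rho> (sgn (k^2))"
  unfolding pow32_branch_def
proof (intro conjI ballI)
  show "sgn (k^2) \<noteq> 0"
    using assms by (simp add: sgn_zero_iff)
  show "(\<lambda>u. slit_sqrt k (u - u0) ^ 3) holomorphic_on slit_disc u0 \<rho> (sgn (k^2))"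
    unfolding slit_sqrt_def using slit_disc_sgn_square_notin_nonpos_Reals[OF assms]
    by (intro holomorphic_intros) auto
  show "(slit_sqrt k (u - u0) ^ 3)^2 = (u - u0)^3" for u
    using slit_sqrt_squared[OF assms] by (metis power_mult mult.commute)
qed

lemma Im_slit_sqrt_mult_pos:
  assumes "k \<noteq> 0" "u \<in> slit_disc u0 \<rho> (sgn (k^2))"
    and "\<epsilon> \<le> norm (sgn (u - u0) - sgn (k^2))" "norm (a - 1) < \<epsilon> / 2"
  shows "0 < Im (slit_sqrt k (u - u0) / k * a)"
proof -
  define m where "m = csqrt (- (u - u0) / k^2)"
  have "Re m \<noteq> 0"
  proof
    assume "Re m = 0"
    then have "m = \<i> * of_real (Im m)"
      by (simp add: complex_eq_iff)
    then have "- (u - u0) / k^2 = - of_real (Im m ^ 2)"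
      by (metis m_def power2_csqrt power_mult_distrib power2_i mult_minus1 of_real_power)
    then show False
      using slit_disc_sgn_square_notin_nonpos_Reals[OF assms(1,2)]
      by (simp add: complex_nonpos_Reals_iff)
  qed
  then have "0 < Re m" "m \<noteq> 0"
    using Re_csqrt[of "- (u - u0) / k^2"] by (auto simp: m_def)
  moreover have "u - u0 = - (k^2 * m^2)"
    using assms(1) by (simp add: m_def)
  ultimately have "\<epsilon> \<le> 2 * Re m / norm m"
    using assms(1,3) norm_sgn_neg_square_diff[of k m] by simp
  then have "\<epsilon> * norm m \<le> 2 * Re m"
    using \<open>m \<noteq> 0\<close> by (simp add: pos_le_divide_eq)
  moreover have "norm (a - 1) * norm m < \<epsilon> / 2 * norm m"
    using assms(4) \<open>m \<noteq> 0\<close> by (simp add: mult_strict_right_mono)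
  ultimately have "norm (a - 1) * norm m < Re m"
    by linarith
  moreover have "slit_sqrt k (u - u0) / k * a = \<i> * (m * a)"
    using assms(1) by (simp add: slit_sqrt_def m_def)
  ultimately show ?thesis
    using Re_mult_pos_near_one by simp
qed

lemma slit_sqrt_sector_root:
  assumes "c \<noteq> 0" "\<beta> \<noteq> 0" "\<rho> > 0" "isCont \<tau> 0" "\<tau> 0 = 1 / c" "\<epsilon> > 0"
  obtains \<rho>' where "\<rho>' > 0"
    "\<And>u. u \<in> slit_disc u0 \<rho>' (sgn ((c * \<beta>)^2)) \<Longrightarrow>
       \<epsilon> \<le> norm (sgn (u - u0) - sgn ((c * \<beta>)^2)) \<Longrightarrow>
       slit_sqrt (c * \<beta>) (u - u0) \<in> ball 0 \<rho> \<and>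
       0 < Im (slit_sqrt (c * \<beta>) (u - u0) * \<tau> (slit_sqrt (c * \<beta>) (u - u0)) / \<beta>)"
proof -
  have "isCont (\<lambda>t. c * \<tau> t) 0"
    using assms(4) by (intro continuous_intros)
  then obtain \<rho>1 where "\<rho>1 > 0" "\<And>t. dist t 0 < \<rho>1 \<Longrightarrow> dist (c * \<tau> t) (c * \<tau> 0) < \<epsilon> / 2"
    using \<open>\<epsilon> > 0\<close> unfolding continuous_at_eps_delta by (meson half_gt_zero)
  then have \<rho>1: "\<rho>1 > 0" "\<And>t. norm t < \<rho>1 \<Longrightarrow> norm (c * \<tau> t - 1) < \<epsilon> / 2"
    using assms(1,5) by (auto simp: dist_norm)
  show ?thesis
  proof
    show "(min \<rho> \<rho>1)^2 > 0"
      using \<rho>1(1) assms(3) by simp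
    fix u
    assume u: "u \<in> slit_disc u0 ((min \<rho> \<rho>1)^2) (sgn ((c * \<beta>)^2))"
      and angle: "\<epsilon> \<le> norm (sgn (u - u0) - sgn ((c * \<beta>)^2))"
    define t where "t = slit_sqrt (c * \<beta>) (u - u0)"
    have "norm t ^ 2 < (min \<rho> \<rho>1)^2"
      using u slit_sqrt_squared[of "c * \<beta>" "u - u0"] assms(1,2)
      by (simp add: t_def slit_disc_def dist_norm norm_minus_commute flip: norm_power)
    then have "norm t < min \<rho> \<rho>1"
      using power_less_imp_less_base \<rho>1(1) assms(3) by (metis min_def less_imp_le)
    then have "t \<in> ball 0 \<rho>" "norm (c * \<tau> t - 1) < \<epsilon> / 2"
      using \<rho>1(2) by auto
    moreover have "0 < Im (t / (c * \<beta>) * (c * \<tau> t))"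
      unfolding t_def
      by (rule Im_slit_sqrt_mult_pos[OF _ u angle]) (use assms(1,2) calculation(2) t_def in auto)
    moreover have "t * \<tau> t / \<beta> = t / (c * \<beta>) * (c * \<tau> t)"
      using assms(1) by (simp add: field_simps)
    ultimately show "t \<in> ball 0 \<rho> \<and> 0 < Im (t * \<tau> t / \<beta>)"
      by (simp only: t_def)
  qed
qed

lemma three_halves_inverse_on_sectors:
  assumes "c \<noteq> 0" "\<beta> \<noteq> 0" "\<rho> > 0" "\<tau> holomorphic_on ball 0 \<rho>" "\<tau> 0 = 1 / c"
    and branch: "\<And>s. norm s ^ 2 < r \<Longrightarrow> 0 < Im (s / \<beta>) \<Longrightarrow>
      z0 + s^2 \<in> slit_disc z0 r d \<and> p (z0 + s^2) = s^3"
    and normal: "\<And>t. t \<in> ball 0 \<rho> \<Longrightarrow> norm (t * \<tau> t)^2 < r \<and>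
      g (z0 + (t * \<tau> t)^2) + h (z0 + (t * \<tau> t)^2) * (t * \<tau> t)^3 = u0 + t^2"
    and expansion: "\<And>t. t \<in> ball 0 \<rho> \<Longrightarrow> G (u0 + t^2) + H (u0 + t^2) * t^3 = z0 + (t * \<tau> t)^2"
    and q: "q = (\<lambda>u. slit_sqrt (c * \<beta>) (u - u0) ^ 3)" and e: "e = sgn ((c * \<beta>)^2)"
  shows "\<forall>\<epsilon>>0. \<exists>\<rho>'>0. \<forall>u. u \<in> slit_disc u0 \<rho>' e \<and>
          norm ((u - u0) / complex_of_real (norm (u - u0)) - e) \<ge> \<epsilon> \<longrightarrow>
          G u + H u * q u \<in> slit_disc z0 r d \<and>
          g (G u + H u * q u) + h (G u + H u * q u) * p (G u + H u * q u) = u"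
proof (intro allI impI)
  fix \<epsilon> :: real
  assume "\<epsilon> > 0"
  have cont: "isCont \<tau> 0"
    using assms(3,4)
    by (metis centre_in_ball continuous_on_interior holomorphic_on_imp_continuous_on interior_ball)
  obtain \<rho>' where "\<rho>' > 0" and root: "\<And>u. u \<in> slit_disc u0 \<rho>' e \<Longrightarrow>
       \<epsilon> \<le> norm (sgn (u - u0) - e) \<Longrightarrow> slit_sqrt (c * \<beta>) (u - u0) \<in> ball 0 \<rho> \<and>
       0 < Im (slit_sqrt (c * \<beta>) (u - u0) * \<tau> (slit_sqrt (c * \<beta>) (u - u0)) / \<beta>)"
    using slit_sqrt_sector_root[OF assms(1-3) cont assms(5) \<open>\<epsilon> > 0\<close>] e by blast
  have "G u + H u * q u \<in> slit_disc z0 r d \<and>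
      g (G u + H u * q u) + h (G u + H u * q u) * p (G u + H u * q u) = u"
    if "u \<in> slit_disc u0 \<rho>' e" "\<epsilon> \<le> norm (sgn (u - u0) - e)" for u
  proof -
    define t where "t = slit_sqrt (c * \<beta>) (u - u0)"
    have t: "t \<in> ball 0 \<rho>" "0 < Im (t * \<tau> t / \<beta>)"
      using root[OF that] by (simp_all add: t_def)
    have u: "u = u0 + t^2"
      using slit_sqrt_squared assms(1,2) by (simp add: t_def)
    have "G u + H u * q u = z0 + (t * \<tau> t)^2"
      unfolding q t_def[symmetric] using expansion[OF t(1)] by (simp add: u)
    then show ?thesis
      using normal[OF t(1)] branch[OF _ t(2)] by (simp add: u)
  qed
  with \<open>\<rho>' > 0\<close> show "\<exists>\<rho>'>0. \<forall>u. u \<in> slit_disc u0 \<rho>' e \<and>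
      norm ((u - u0) / complex_of_real (norm (u - u0)) - e) \<ge> \<epsilon> \<longrightarrow>
      G u + H u * q u \<in> slit_disc z0 r d \<and>
      g (G u + H u * q u) + h (G u + H u * q u) * p (G u + H u * q u) = u"
    by (auto simp flip: sgn_eq)
qed

theorem mainTheorem1:
  fixes g h p :: "complex \<Rightarrow> complex" and z0 d :: complex and r :: real
  assumes "r > 0"
    and "g holomorphic_on ball z0 r" and "h holomorphic_on ball z0 r"
    and "deriv g z0 \<noteq> 0" and "h z0 \<noteq> 0"
    and "pow32_branch p z0 r d"
  shows "\<exists>\<delta>>0. \<exists>G H q e.
     G holomorphic_on ball (g z0) \<delta> \<and> H holomorphic_on ball (g z0) \<delta> \<and>
     norm e = 1 \<and> pow32_branch q (g z0) \<delta> e \<and>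
     (\<forall>\<epsilon>>0. \<exists>\<rho>>0. \<forall>u. u \<in> slit_disc (g z0) \<rho> e \<and>
          norm ((u - g z0) / complex_of_real (norm (u - g z0)) - e) \<ge> \<epsilon> \<longrightarrow>
          G u + H u * q u \<in> slit_disc z0 r d \<and>
          g (G u + H u * q u) + h (G u + H u * q u) * p (G u + H u * q u) = u) \<and>
     G (g z0) = z0 \<and> deriv G (g z0) = 1 / deriv g z0 \<and>
     (\<exists>c. c^2 = deriv g z0 \<and> H (g z0) = - h z0 / c^5)"
proof -
  define c where "c = csqrt (deriv g z0)"
  have c: "c^2 = deriv g z0" "c \<noteq> 0"
    using assms(4) by (auto simp: c_def)
  obtain \<rho> \<tau> where \<tau>: "\<rho> > 0" "\<tau> holomorphic_on ball 0 \<rho>" "\<tau> 0 = 1 / c"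
      "deriv \<tau> 0 = - h z0 / (2 * c^4)"
    and normal: "\<And>t. t \<in> ball 0 \<rho> \<Longrightarrow> norm (t * \<tau> t)^2 < r \<and>
      g (z0 + (t * \<tau> t)^2) + h (z0 + (t * \<tau> t)^2) * (t * \<tau> t)^3 = g z0 + t^2"
    using quadratic_normal_form[OF assms(1-3) c] by blast
  obtain G H where GH: "G holomorphic_on ball (g z0) (\<rho>^2)" "H holomorphic_on ball (g z0) (\<rho>^2)"
      "\<And>t. t \<in> ball 0 \<rho> \<Longrightarrow> G (g z0 + t^2) + H (g z0 + t^2) * t^3 = z0 + (t * \<tau> t)^2"
      "G (g z0) = z0" "deriv G (g z0) = \<tau> 0 ^ 2" "H (g z0) = 2 * \<tau> 0 * deriv \<tau> 0"
    using three_halves_expansion[OF \<tau>(2,1)] by blast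
  obtain \<beta> where "\<beta> \<noteq> 0" and branch: "\<And>s. norm s ^ 2 < r \<Longrightarrow> 0 < Im (s / \<beta>) \<Longrightarrow>
      z0 + s^2 \<in> slit_disc z0 r d \<and> p (z0 + s^2) = s^3"
    using pow32_branch_upper_half_plane[OF assms(6)] by blast
  \<comment> \<open>for the root \<open>t\<close> of \<open>u - g z0\<close> taken by \<open>slit_sqrt (c * \<beta>)\<close>, \<open>s = t \<tau>(t) \<approx> t / c\<close>
    lies in the half plane \<open>Im (s / \<beta>) > 0\<close> where \<open>branch\<close> applies\<close>
  define q where "q = (\<lambda>u. slit_sqrt (c * \<beta>) (u - g z0) ^ 3)"
  define e where "e = sgn ((c * \<beta>)^2)"
  have "pow32_branch q (g z0) (\<rho>^2) e" "norm e = 1"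
    using pow32_branch_slit_sqrt c(2) \<open>\<beta> \<noteq> 0\<close> by (simp_all add: q_def e_def norm_sgn)
  moreover note three_halves_inverse_on_sectors[OF c(2) \<open>\<beta> \<noteq> 0\<close> \<tau>(1-3) branch normal GH(3) q_def e_def]
  moreover have "H (g z0) = - h z0 / c^5" "deriv G (g z0) = 1 / deriv g z0"
    using GH(5,6) \<tau>(3,4) c(2) by (simp_all add: c(1)[symmetric] field_simps eval_nat_numeral)
  moreover have "\<rho>^2 > 0"
    using \<tau>(1) by simp
  ultimately show ?thesis
    using GH(1,2,4) c(1) by blast
qed

end
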